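(* Let $m$ be a positive integer and let $\mathcal Z$ be a three-class symmetric association scheme with adjacency matrices $A_0=I,A_1,A_2,A_3$ whose character table is $$P=\begin{bmatrix}1&m(m-1)&m(m+1)&(m-1)(m+1)\\1&m&0&-m-1\\1&0&-m&m-1\\1&-m&m&-1\end{bmatrix}.$$ Then $A_1$, $A_2$ and $A_3+A_0$ are incidence matrices of symmetric partial geometric designs with parameters $(v,k;\alpha,\beta)$ respectively $$\big(3m^2,\ m(m-1);\ \tfrac13m^2(m^2-3m+2),\ \tfrac13m^2(m^2-3m+5)\big),$$ $$\big(3m^2,\ m(m+1);\ \tfrac13m^2(m^2+3m+2),\ \tfrac13m^2(m^2+3m+5)\big),$$ $$\big(3m^2,\ m^2;\ \tfrac13m^2(m^2-1),\ \tfrac13m^2(m^2+2)\big).$$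
   Context: A three-class symmetric association scheme has symmetric $0/1$ adjacency matrices $A_0=I,A_1,A_2,A_3$ summing to the all-ones matrix $J$ with $A_iA_j=\sum_hp_{ij}^hA_h$. Its character table is the matrix $P$ with $P_{ij}=p_j(i)$, where $A_j=\sum_i p_j(i)E_i$ and $E_0=\frac1{|X|}J,E_1,E_2,E_3$ are the primitive idempotents of the Bose–Mesner algebra. A symmetric partial geometric design with parameters $(v,k;\alpha,\beta)$ is a design with $v$ points and $v$ blocks, each block of size $k$, each point in $k$ blocks, whose incidence matrix $N$ satisfies $NN^TN=\beta N+\alpha(J-N)$. *)

theory Defs
  imports "HOL-Analysis.Analysis"
begin

definition Jmat :: "real^'n^'n" where
  "Jmat = (\<chi> i j. 1)"

definition zero_one_matrix :: "real^'n^'n \<Rightarrow> bool" where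
  "zero_one_matrix M \<longleftrightarrow> (\<forall>i j. M $ i $ j = 0 \<or> M $ i $ j = 1)"

definition sym_assoc_scheme :: "nat \<Rightarrow> (nat \<Rightarrow> real^'n^'n) \<Rightarrow> bool" where
  "sym_assoc_scheme d A \<longleftrightarrow>
     A 0 = mat 1 \<and>
     (\<forall>i\<le>d. zero_one_matrix (A i) \<and> transpose (A i) = A i \<and> A i \<noteq> 0) \<and>
     (\<Sum>i\<le>d. A i) = Jmat \<and>
     (\<forall>i\<le>d. \<forall>j\<le>d. \<exists>p :: nat \<Rightarrow> real. A i ** A j = (\<Sum>h\<le>d. p h *\<^sub>R A h))"

text \<open>The Bose--Mesner algebra and its primitive idempotents E 0 = J/|X|, E 1, ..., E d:
  nonzero, pairwise orthogonal idempotents of the Bose--Mesner algebra summing to I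
  (these form the basis of primitive idempotents of the d+1 dimensional algebra).\<close>

definition bose_mesner :: "nat \<Rightarrow> (nat \<Rightarrow> real^'n^'n) \<Rightarrow> (real^'n^'n) set" where
  "bose_mesner d A = span (A ` {..d})"

definition primitive_idempotents ::
  "nat \<Rightarrow> (nat \<Rightarrow> real^'n^'n) \<Rightarrow> (nat \<Rightarrow> real^'n^'n) \<Rightarrow> bool" where
  "primitive_idempotents d A E \<longleftrightarrow>
     E 0 = (1 / real CARD('n)) *\<^sub>R Jmat \<and>
     (\<forall>i\<le>d. E i \<in> bose_mesner d A \<and> E i \<noteq> 0) \<and>
     (\<forall>i\<le>d. \<forall>j\<le>d. E i ** E j = (if i = j then E i else 0)) \<and>
     (\<Sum>i\<le>d. E i) = mat 1"

definition has_character_table ::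
  "nat \<Rightarrow> (nat \<Rightarrow> real^'n^'n) \<Rightarrow> (nat \<Rightarrow> nat \<Rightarrow> real) \<Rightarrow> bool" where
  "has_character_table d A P \<longleftrightarrow>
     (\<exists>E. primitive_idempotents d A E \<and>
          (\<forall>j\<le>d. A j = (\<Sum>i\<le>d. P i j *\<^sub>R E i)))"

definition charP :: "nat \<Rightarrow> nat \<Rightarrow> nat \<Rightarrow> real" where
  "charP m i j = (let r = real m in
     [[1, r*(r-1), r*(r+1), (r-1)*(r+1)],
      [1, r, 0, -r-1],
      [1, 0, -r, r-1],
      [1, -r, r, -1]] ! i ! j)"

text \<open>Symmetric partial geometric design with parameters (v,k;alpha,beta), given by its
  v x v incidence matrix N (points = rows, blocks = columns).\<close>

definition sym_partial_geometric_design ::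
  "real^'n^'n \<Rightarrow> nat \<Rightarrow> nat \<Rightarrow> real \<Rightarrow> real \<Rightarrow> bool" where
  "sym_partial_geometric_design N v k \<alpha> \<beta> \<longleftrightarrow>
     CARD('n) = v \<and> zero_one_matrix N \<and>
     (\<forall>j. (\<Sum>i\<in>UNIV. N $ i $ j) = real k) \<and>
     (\<forall>i. (\<Sum>j\<in>UNIV. N $ i $ j) = real k) \<and>
     N ** transpose N ** N = \<beta> *\<^sub>R N + \<alpha> *\<^sub>R (Jmat - N)"

end

theory Submission
  imports Defs
begin

text \<open>The primitive idempotents diagonalise the Bose--Mesner algebra: if a symmetric matrix
  \<open>N = \<Sum>i. \<theta>\<^sub>i E\<^sub>i\<close> lies in it, then \<open>N N\<^sup>T N = \<Sum>i. \<theta>\<^sub>i\<^sup>3 E\<^sub>i\<close>, while \<open>J = |X| E\<^sub>0\<close> turns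
  \<open>\<beta> N + \<alpha> (J - N)\<close> into \<open>\<Sum>i. (\<beta> \<theta>\<^sub>i + \<alpha> (|X| [i = 0] - \<theta>\<^sub>i)) E\<^sub>i\<close>.
  So a union of classes, whose eigenvalues \<open>\<theta>\<^sub>i\<close> are sums of columns of the character
  table, is a symmetric partial geometric design as soon as \<open>\<theta>\<^sub>i\<^sup>3 = (\<beta> - \<alpha>) \<theta>\<^sub>i\<close> for
  \<open>i > 0\<close> and \<open>k\<^sup>3 = (\<beta> - \<alpha>) k + \<alpha> |X|\<close>. It is a 0/1 matrix because the classes
  partition \<open>J\<close>, and \<open>|X| = 3 m\<^sup>2\<close> is the first row sum of the table. In all three cases
  \<open>\<beta> - \<alpha> = m\<^sup>2\<close> and the nontrivial eigenvalues lie in \<open>{0, m, -m}\<close>.\<close>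

lemma matrix_add_rdistrib: "((A :: 'a::semiring_1^'n^'m) + B) ** C = A ** C + B ** C"
  by (vector matrix_matrix_mult_def sum.distrib[symmetric] field_simps)

lemma matrix_mul_sum_left:
  "(\<Sum>i\<in>I. f i) ** (B :: 'a::semiring_1^'p^'n) = (\<Sum>i\<in>I. (f i :: 'a^'n^'m) ** B)"
  by (induction I rule: infinite_finite_induct) (auto simp: matrix_add_rdistrib)

lemma matrix_mul_sum_right:
  "(B :: 'a::semiring_1^'n^'m) ** (\<Sum>i\<in>I. f i) = (\<Sum>i\<in>I. B ** (f i :: 'a^'p^'n))"
  by (induction I rule: infinite_finite_induct) (auto simp: matrix_add_ldistrib)

lemma transpose_sum:
  "transpose (\<Sum>i\<in>I. f i) = (\<Sum>i\<in>I. transpose (f i :: 'a::comm_monoid_add^'n^'m))"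
  by (induction I rule: infinite_finite_induct) (auto simp: transpose_def vec_eq_iff)

lemma orthogonal_idempotents_mult:
  fixes E :: "nat \<Rightarrow> real^'n^'n"
  assumes "\<forall>i\<le>d. \<forall>j\<le>d. E i ** E j = (if i = j then E i else 0)"
  shows "(\<Sum>i\<le>d. a i *\<^sub>R E i) ** (\<Sum>j\<le>d. b j *\<^sub>R E j) = (\<Sum>i\<le>d. (a i * b i) *\<^sub>R E i)"
proof -
  have "(\<Sum>i\<le>d. a i *\<^sub>R E i) ** (\<Sum>j\<le>d. b j *\<^sub>R E j)
      = (\<Sum>j\<le>d. \<Sum>i\<le>d. (a i * b j) *\<^sub>R (E i ** E j))"
    by (simp add: matrix_mul_sum_left matrix_mul_sum_right matrix_scalar_ac scaleR_sum_right
        mult.commute flip: scalar_matrix_assoc)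
  also have "\<dots> = (\<Sum>i\<le>d. \<Sum>j\<le>d. (a i * b j) *\<^sub>R (E i ** E j))"
    by (rule sum.swap)
  also have "\<dots> = (\<Sum>i\<le>d. \<Sum>j\<le>d. if j = i then (a i * b i) *\<^sub>R E i else 0)"
    using assms by (intro sum.cong refl) auto
  finally show ?thesis
    by (simp add: sum.delta)
qed

lemma orthogonal_idempotents_mult_right:
  fixes E :: "nat \<Rightarrow> real^'n^'n"
  assumes "\<forall>i\<le>d. \<forall>j\<le>d. E i ** E j = (if i = j then E i else 0)" and "k \<le> d"
  shows "(\<Sum>i\<le>d. a i *\<^sub>R E i) ** E k = a k *\<^sub>R E k"
proof -
  have "(\<Sum>i\<le>d. a i *\<^sub>R E i) ** E k = (\<Sum>i\<le>d. a i *\<^sub>R (E i ** E k))"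
    by (simp add: matrix_mul_sum_left scalar_matrix_assoc)
  also have "\<dots> = (\<Sum>i\<le>d. if i = k then a k *\<^sub>R E k else 0)"
    using assms by (intro sum.cong refl) auto
  finally have "(\<Sum>i\<le>d. a i *\<^sub>R E i) ** E k = (\<Sum>i\<le>d. if i = k then a k *\<^sub>R E k else 0)" .
  with assms(2) show ?thesis
    by (simp add: sum.delta)
qed

lemma sum_scaleR_delta_0:
  fixes d :: nat
  shows "(\<Sum>i\<le>d. (if i = 0 then c else 0) *\<^sub>R (x i :: 'a::real_vector)) = c *\<^sub>R x 0"
proof -
  have "(\<Sum>i\<le>d. (if i = 0 then c else 0) *\<^sub>R x i) = (\<Sum>i\<le>d. if i = 0 then c *\<^sub>R x i else 0)"
    by (intro sum.cong) auto
  then show ?thesis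
    by (simp add: sum.delta)
qed

lemma Jmat_eq_primitive_idempotents:
  fixes E :: "nat \<Rightarrow> real^'n^'n"
  assumes "primitive_idempotents d A E"
  shows "Jmat = (\<Sum>i\<le>d. (if i = 0 then real CARD('n) else 0) *\<^sub>R E i)"
  using assms by (simp add: primitive_idempotents_def sum_scaleR_delta_0)

lemma card_eq_character_table_row_sum:
  fixes A :: "nat \<Rightarrow> real^'n^'n"
  assumes "sym_assoc_scheme d A" and "has_character_table d A P"
  shows "real CARD('n) = (\<Sum>j\<le>d. P 0 j)"
proof -
  obtain E where E: "primitive_idempotents d A E"
    and A: "\<forall>j\<le>d. A j = (\<Sum>i\<le>d. P i j *\<^sub>R E i)"
    using assms(2) unfolding has_character_table_def by blast
  have orth: "\<forall>i\<le>d. \<forall>j\<le>d. E i ** E j = (if i = j then E i else 0)"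
    and "E 0 \<noteq> 0"
    using E unfolding primitive_idempotents_def by auto
  have "(\<Sum>i\<le>d. (if i = 0 then real CARD('n) else 0) *\<^sub>R E i) = (\<Sum>j\<le>d. A j)"
    using assms(1) E by (simp add: sym_assoc_scheme_def Jmat_eq_primitive_idempotents)
  also have "\<dots> = (\<Sum>i\<le>d. (\<Sum>j\<le>d. P i j) *\<^sub>R E i)"
    using A by (simp add: scaleR_sum_left) (rule sum.swap)
  finally have "(\<Sum>i\<le>d. (if i = 0 then real CARD('n) else 0) *\<^sub>R E i) ** E 0
      = (\<Sum>i\<le>d. (\<Sum>j\<le>d. P i j) *\<^sub>R E i) ** E 0"
    by simp
  then have "real CARD('n) *\<^sub>R E 0 = (\<Sum>j\<le>d. P 0 j) *\<^sub>R E 0"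
    by (simp add: orthogonal_idempotents_mult_right[OF orth])
  with \<open>E 0 \<noteq> 0\<close> show ?thesis
    by simp
qed

lemma zero_one_matrix_sum_classes:
  fixes A :: "nat \<Rightarrow> real^'n^'n"
  assumes "sym_assoc_scheme d A" and "S \<subseteq> {..d}"
  shows "zero_one_matrix (\<Sum>j\<in>S. A j)"
  unfolding zero_one_matrix_def
proof (intro allI)
  fix a b
  define T where "T = {j. j \<le> d \<and> A j $ a $ b = 1}"
  have "A j $ a $ b = 0 \<or> A j $ a $ b = 1" if "j \<le> d" for j
    using assms(1) that unfolding sym_assoc_scheme_def zero_one_matrix_def by blast
  then have entry: "A j $ a $ b = of_bool (j \<in> T)" if "j \<le> d" for j
    using that unfolding T_def by fastforce
  have entry_sum: "(\<Sum>j\<in>R. A j) $ a $ b = real (card (R \<inter> T))" if "R \<subseteq> {..d}" for R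
  proof -
    have "(\<Sum>j\<in>R. A j $ a $ b) = (\<Sum>j\<in>R. of_bool (j \<in> T))"
      using that entry by (intro sum.cong) auto
    with that show ?thesis
      by (simp add: sum_of_bool_eq finite_subset)
  qed
  have "card ({..d} \<inter> T) = 1"
    using entry_sum[of "{..d}"] assms(1)
    by (simp add: sym_assoc_scheme_def Jmat_def del: sum_component)
  moreover have "card (S \<inter> T) \<le> card ({..d} \<inter> T)"
    using assms(2) by (intro card_mono) auto
  ultimately have "card (S \<inter> T) = 0 \<or> card (S \<inter> T) = 1"
    by linarith
  then show "(\<Sum>j\<in>S. A j) $ a $ b = 0 \<or> (\<Sum>j\<in>S. A j) $ a $ b = 1"
    using entry_sum[OF assms(2)] by auto
qed

lemma transpose_Jmat [simp]: "transpose Jmat = Jmat"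
  by (simp add: transpose_def Jmat_def)

lemma sym_partial_geometric_design_of_eigenvalues:
  fixes N :: "real^'n^'n"
  assumes E: "primitive_idempotents d A E"
    and N: "N = (\<Sum>i\<le>d. \<theta> i *\<^sub>R E i)"
    and sym: "transpose N = N" and "zero_one_matrix N"
    and \<theta>0: "\<theta> 0 = real k"
    and cubic0: "real k ^ 3 = (\<beta> - \<alpha>) * real k + \<alpha> * real CARD('n)"
    and cubic: "\<forall>i\<in>{1..d}. \<theta> i ^ 3 = (\<beta> - \<alpha>) * \<theta> i"
  shows "sym_partial_geometric_design N CARD('n) k \<alpha> \<beta>"
proof -
  define n where "n = real CARD('n)"
  have orth: "\<forall>i\<le>d. \<forall>j\<le>d. E i ** E j = (if i = j then E i else 0)"
    using E unfolding primitive_idempotents_def by auto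
  have J: "Jmat = (\<Sum>i\<le>d. (if i = 0 then n else 0) *\<^sub>R E i)"
    using Jmat_eq_primitive_idempotents[OF E] unfolding n_def .
  have NJ: "N ** Jmat = real k *\<^sub>R Jmat"
  proof -
    have "N ** Jmat = n *\<^sub>R (N ** E 0)"
      by (simp add: J sum_scaleR_delta_0 matrix_scalar_ac flip: scalar_matrix_assoc)
    also have "\<dots> = real k *\<^sub>R Jmat"
      by (simp add: N \<theta>0 J sum_scaleR_delta_0 orthogonal_idempotents_mult_right[OF orth])
    finally show ?thesis .
  qed
  have JN: "Jmat ** N = real k *\<^sub>R Jmat"
    using arg_cong[OF NJ, of transpose] by (simp add: matrix_transpose_mul sym transpose_scalar)
  have "(\<Sum>j\<in>UNIV. N $ i $ j) = real k" for i
    using arg_cong[OF NJ, of "\<lambda>M. M $ i $ i"] by (simp add: matrix_matrix_mult_def Jmat_def)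
  moreover have "(\<Sum>i\<in>UNIV. N $ i $ j) = real k" for j
    using arg_cong[OF JN, of "\<lambda>M. M $ j $ j"] by (simp add: matrix_matrix_mult_def Jmat_def)
  moreover have "N ** N ** N = \<beta> *\<^sub>R N + \<alpha> *\<^sub>R (Jmat - N)"
  proof -
    have "\<theta> i * \<theta> i * \<theta> i = \<beta> * \<theta> i + \<alpha> * ((if i = 0 then n else 0) - \<theta> i)"
      if "i \<le> d" for i
    proof (cases "i = 0")
      case True
      then show ?thesis
        using cubic0 by (simp add: \<theta>0 n_def power3_eq_cube algebra_simps)
    next
      case False
      with that cubic show ?thesis
        by (simp add: power3_eq_cube algebra_simps)
    qed
    then have "N ** N ** N
        = (\<Sum>i\<le>d. (\<beta> * \<theta> i + \<alpha> * ((if i = 0 then n else 0) - \<theta> i)) *\<^sub>R E i)"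
      unfolding N orthogonal_idempotents_mult[OF orth] by (intro sum.cong) auto
    also have "\<dots> = \<beta> *\<^sub>R N + \<alpha> *\<^sub>R (Jmat - N)"
      by (simp add: J N scaleR_sum_right algebra_simps flip: sum.distrib sum_subtractf)
    finally show ?thesis .
  qed
  ultimately show ?thesis
    using \<open>zero_one_matrix N\<close> sym unfolding sym_partial_geometric_design_def by simp
qed

lemma sym_partial_geometric_design_union_of_classes:
  fixes A :: "nat \<Rightarrow> real^'n^'n"
  assumes scheme: "sym_assoc_scheme d A" and "has_character_table d A P" and S: "S \<subseteq> {..d}"
    and "(\<Sum>j\<in>S. P 0 j) = real k"
    and "real k ^ 3 = (\<beta> - \<alpha>) * real k + \<alpha> * real CARD('n)"
    and "\<forall>i\<in>{1..d}. (\<Sum>j\<in>S. P i j) ^ 3 = (\<beta> - \<alpha>) * (\<Sum>j\<in>S. P i j)"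
  shows "sym_partial_geometric_design (\<Sum>j\<in>S. A j) CARD('n) k \<alpha> \<beta>"
proof -
  obtain E where E: "primitive_idempotents d A E"
    and A: "\<forall>j\<le>d. A j = (\<Sum>i\<le>d. P i j *\<^sub>R E i)"
    using assms(2) unfolding has_character_table_def by blast
  have "(\<Sum>j\<in>S. A j) = (\<Sum>j\<in>S. \<Sum>i\<le>d. P i j *\<^sub>R E i)"
    using A S by (intro sum.cong) auto
  also have "\<dots> = (\<Sum>i\<le>d. (\<Sum>j\<in>S. P i j) *\<^sub>R E i)"
    by (simp add: scaleR_sum_left) (rule sum.swap)
  finally have spectral: "(\<Sum>j\<in>S. A j) = (\<Sum>i\<le>d. (\<Sum>j\<in>S. P i j) *\<^sub>R E i)" .
  have "transpose (\<Sum>j\<in>S. A j) = (\<Sum>j\<in>S. A j)"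
    using scheme S unfolding sym_assoc_scheme_def transpose_sum by (intro sum.cong) auto
  with zero_one_matrix_sum_classes[OF scheme S] show ?thesis
    using assms(4-) by (intro sym_partial_geometric_design_of_eigenvalues[OF E spectral]) auto
qed

theorem theorem5p2:
  fixes m :: nat and A :: "nat \<Rightarrow> real^'n^'n"
  assumes "m > 0"
    and "sym_assoc_scheme 3 A"
    and "has_character_table 3 A (charP m)"
  shows "sym_partial_geometric_design (A 1) (3*m^2) (m*(m-1))
           (real m^2 * (real m^2 - 3*real m + 2) / 3) (real m^2 * (real m^2 - 3*real m + 5) / 3) \<and>
         sym_partial_geometric_design (A 2) (3*m^2) (m*(m+1))
           (real m^2 * (real m^2 + 3*real m + 2) / 3) (real m^2 * (real m^2 + 3*real m + 5) / 3) \<and>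
         sym_partial_geometric_design (A 3 + A 0) (3*m^2) (m^2)
           (real m^2 * (real m^2 - 1) / 3) (real m^2 * (real m^2 + 2) / 3)"
proof -
  have classes: "{..3::nat} = {0, 1, 2, 3}" "{1..3::nat} = {1, 2, 3}"
    by auto
  have "real CARD('n) = real (3 * m ^ 2)"
    using card_eq_character_table_row_sum[OF assms(2,3)]
    by (simp add: classes charP_def Let_def power2_eq_square algebra_simps)
  then have card: "CARD('n) = 3 * m ^ 2"
    by (simp only: of_nat_eq_iff)
  note design = sym_partial_geometric_design_union_of_classes[OF assms(2,3), unfolded card classes]
  have "sym_partial_geometric_design (\<Sum>j\<in>{1}. A j) (3*m^2) (m*(m-1))
           (real m^2 * (real m^2 - 3*real m + 2) / 3) (real m^2 * (real m^2 - 3*real m + 5) / 3)"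
    using assms(1) by (intro design)
      (auto simp: charP_def Let_def of_nat_diff field_simps power2_eq_square power3_eq_cube)
  moreover have "sym_partial_geometric_design (\<Sum>j\<in>{2}. A j) (3*m^2) (m*(m+1))
           (real m^2 * (real m^2 + 3*real m + 2) / 3) (real m^2 * (real m^2 + 3*real m + 5) / 3)"
    by (intro design)
      (auto simp: charP_def Let_def field_simps power2_eq_square power3_eq_cube)
  moreover have "sym_partial_geometric_design (\<Sum>j\<in>{0,3}. A j) (3*m^2) (m^2)
           (real m^2 * (real m^2 - 1) / 3) (real m^2 * (real m^2 + 2) / 3)"
    by (intro design)
      (auto simp: charP_def Let_def field_simps power2_eq_square power3_eq_cube)
  ultimately show ?thesis
    by (simp add: add.commute)
qed

end
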